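(* Let $\Delta$ be an isosceles triangle with side lengths $(2,2,1)$, and let $\rho_\diamond=\rho(\tfrac12,\sqrt3)$. Then $\Delta$ can be domed if and only if $\rho_\diamond$ can be domed.
   Context: Closed polygons with integer side lengths are regarded as closed polygons with unit edges by subdividing each side of length $k$ into $k$ collinear unit segments (so $\Delta$ has $5$ unit edges). A unit rhombus $\rho(a,b)$ is a closed polygon $[v_1v_2v_3v_4]$ in $\mathbb{R}^3$ with four sides of length $1$ and $|v_1v_3|=a$, $|v_2v_4|=b$. A closed polygon with unit edges can be domed if there is a finite connected 2-dimensional simplicial complex which is a compact surface with a single boundary cycle, with a map to $\mathbb{R}^3$ linear on simplices sending each triangle to a unit equilateral triangle and the boundary cycle onto the polygon vertex by vertex in cyclic order. *)

theory Defs
  imports "HOL-Analysis.Analysis"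
begin

text \<open>A finite 2-dimensional simplicial complex is given by its set of triangles
  (3-element vertex sets; vertices are natural numbers, which is no loss of generality
  for a finite complex). Every vertex and edge lies in a triangle (purity).\<close>

definition cx_vertices :: "nat set set \<Rightarrow> nat set" where
  "cx_vertices T = \<Union>T"

definition cx_edges :: "nat set set \<Rightarrow> nat set set" where
  "cx_edges T = {e. card e = 2 \<and> (\<exists>t\<in>T. e \<subseteq> t)}"

definition cx_boundary_edges :: "nat set set \<Rightarrow> nat set set" where
  "cx_boundary_edges T = {e \<in> cx_edges T. card {t \<in> T. e \<subseteq> t} = 1}"

definition link_vertices :: "nat set set \<Rightarrow> nat \<Rightarrow> nat set" where
  "link_vertices T v = \<Union>{t - {v} | t. t \<in> T \<and> v \<in> t}"

definition link_adj :: "nat set set \<Rightarrow> nat \<Rightarrow> (nat \<times> nat) set" where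
  "link_adj T v = {(x, y). {v, x, y} \<in> T \<and> x \<noteq> y \<and> x \<noteq> v \<and> y \<noteq> v}"

definition cx_adj :: "nat set set \<Rightarrow> (nat \<times> nat) set" where
  "cx_adj T = {(x, y). \<exists>t\<in>T. x \<in> t \<and> y \<in> t}"

text \<open>A finite connected 2-dimensional simplicial complex which is a compact surface
  (with boundary): every edge lies in one or two triangles and every vertex link is
  connected (hence a path or a cycle), so each vertex has a disc or half-disc
  neighbourhood.\<close>

definition surface_complex :: "nat set set \<Rightarrow> bool" where
  "surface_complex T \<longleftrightarrow>
     finite T \<and> T \<noteq> {} \<and> (\<forall>t\<in>T. card t = 3) \<and>
     (\<forall>x\<in>cx_vertices T. \<forall>y\<in>cx_vertices T. (x, y) \<in> (cx_adj T)\<^sup>*) \<and>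
     (\<forall>e\<in>cx_edges T. card {t \<in> T. e \<subseteq> t} \<le> 2) \<and>
     (\<forall>v\<in>cx_vertices T. \<forall>x\<in>link_vertices T v. \<forall>y\<in>link_vertices T v.
        (x, y) \<in> (link_adj T v)\<^sup>*)"

definition boundary_cycle :: "nat set set \<Rightarrow> nat \<Rightarrow> (nat \<Rightarrow> nat) \<Rightarrow> bool" where
  "boundary_cycle T n b \<longleftrightarrow> 3 \<le> n \<and> inj_on b {..<n} \<and>
     cx_boundary_edges T = {{b i, b (Suc i mod n)} | i. i < n}"

text \<open>A closed polygon with unit edges, given by its cyclic list of vertices P!0, ..., P!(n-1),
  can be domed: there is such a surface complex T, a map f of its vertices to R^3 sending each
  triangle to a unit equilateral triangle (linear extension on simplices is implicit), and the
  boundary cycle is mapped onto the polygon vertex by vertex in cyclic order.\<close>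

definition can_be_domed :: "(real^3) list \<Rightarrow> bool" where
  "can_be_domed P \<longleftrightarrow>
     (\<exists>T f b. surface_complex T \<and> boundary_cycle T (length P) b \<and>
        (\<forall>t\<in>T. \<forall>x\<in>t. \<forall>y\<in>t. x \<noteq> y \<longrightarrow> dist (f x) (f y) = 1) \<and>
        (\<forall>i < length P. f (b i) = P ! i))"

text \<open>Triangle [A B C] with side lengths (2,2,1), subdivided into 5 unit edges.\<close>

definition tri_221_polygon :: "real^3 \<Rightarrow> real^3 \<Rightarrow> real^3 \<Rightarrow> (real^3) list" where
  "tri_221_polygon A B C = [A, midpoint A B, B, midpoint B C, C]"

definition is_unit_rhombus :: "real \<Rightarrow> real \<Rightarrow> real^3 \<Rightarrow> real^3 \<Rightarrow> real^3 \<Rightarrow> real^3 \<Rightarrow> bool" where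
  "is_unit_rhombus a b v1 v2 v3 v4 \<longleftrightarrow>
     dist v1 v2 = 1 \<and> dist v2 v3 = 1 \<and> dist v3 v4 = 1 \<and> dist v4 v1 = 1 \<and>
     dist v1 v3 = a \<and> dist v2 v4 = b"

end

theory Submission
  imports Defs
begin

text \<open>Extend the sides \<open>v2 v1\<close> and \<open>v2 v3\<close> of the rhombus to length 2, ending at
  \<open>A' = 2 v1 - v2\<close> and \<open>C' = 2 v3 - v2\<close>. Since \<open>|v1 v3| = 1/2\<close>, the triangle \<open>A' v2 C'\<close> has
  sides \<open>(2, 2, 1)\<close>, so it is congruent to \<open>\<Delta>\<close> and its subdivided boundary is
  \<open>A' v1 v2 v3 C'\<close>; moreover \<open>v4\<close> is at unit distance from \<open>A'\<close>, \<open>v1\<close>, \<open>v3\<close>, \<open>C'\<close>. The three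
  unit triangles \<open>v4 v1 A'\<close>, \<open>v4 A' C'\<close>, \<open>v4 C' v3\<close> therefore turn a dome of the rhombus into a
  dome of the pentagon (glue them on one by one), and a dome of the pentagon into one of the
  rhombus (cone off the boundary path \<open>v3 C' A' v1\<close> from a new vertex mapped to \<open>v4\<close>). Domes
  are transported along the isometry between \<open>\<Delta>\<close> and \<open>A' v2 C'\<close>.\<close>

definition householder :: "'a::real_inner \<Rightarrow> 'a \<Rightarrow> 'a" where
  "householder v x = (if v = 0 then x else x - (2 * (v \<bullet> x) / (v \<bullet> v)) *\<^sub>R v)"

lemma orthogonal_transformation_householder: "orthogonal_transformation (householder v)"
proof -
  have "linear (householder v)"
    by (rule linearI)
      (auto simp: householder_def inner_add_right inner_scaleR_right algebra_simps add_divide_distrib)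
  moreover have "householder v x \<bullet> householder v y = x \<bullet> y" for x y
  proof (cases "v = 0")
    case False
    then have "v \<bullet> v \<noteq> 0" by simp
    then show ?thesis
      by (simp add: householder_def inner_diff_left inner_diff_right inner_commute field_simps power2_eq_square)
  qed (simp add: householder_def)
  ultimately show ?thesis unfolding orthogonal_transformation_def by blast
qed

lemma householder_swap:
  assumes "norm p = norm q"
  shows "householder (p - q) p = q"
proof (cases "p = q")
  case False
  have "p \<bullet> p = q \<bullet> q" using assms by (metis power2_norm_eq_inner)
  then have "(p - q) \<bullet> (p - q) = 2 * ((p - q) \<bullet> p)"
    by (simp add: inner_diff_left inner_diff_right inner_commute)
  moreover have "(p - q) \<bullet> (p - q) \<noteq> 0" using False by simp
  ultimately show ?thesis using False by (simp add: householder_def)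
qed (simp add: householder_def)

lemma householder_fixed:
  assumes "r \<bullet> p = r \<bullet> q"
  shows "householder (p - q) r = r"
  using assms by (simp add: householder_def inner_diff_left inner_diff_right inner_commute)

lemma orthogonal_transformation_exists_2:
  fixes a b a' b' :: "'a::real_inner"
  assumes "norm a = norm a'" "norm b = norm b'" "a \<bullet> b = a' \<bullet> b'"
  obtains L where "orthogonal_transformation L" "L a = a'" "L b = b'"
proof -
  define H where "H = householder (a - a')"
  define L where "L = householder (H b - b') \<circ> H"
  have H: "orthogonal_transformation H" "H a = a'"
    using assms(1) by (simp_all add: H_def orthogonal_transformation_householder householder_swap)
  then have "a' \<bullet> H b = a' \<bullet> b'" using assms(3) by (metis orthogonal_transformation_def)
  then have "L a = a'" by (simp add: L_def H householder_fixed)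
  moreover have "norm (H b) = norm b'" using H assms(2) by (metis orthogonal_transformation)
  then have "L b = b'" by (simp add: L_def householder_swap)
  moreover have "orthogonal_transformation L"
    unfolding L_def using H(1) by (simp add: orthogonal_transformation_compose orthogonal_transformation_householder)
  ultimately show thesis using that by blast
qed

lemma can_be_domed_map:
  assumes "can_be_domed P" and "\<And>x y. dist x y = 1 \<Longrightarrow> dist (g x) (g y) = 1"
  shows "can_be_domed (map g P)"
proof -
  obtain T f b where "surface_complex T" "boundary_cycle T (length P) b"
    "\<forall>t\<in>T. \<forall>x\<in>t. \<forall>y\<in>t. x \<noteq> y \<longrightarrow> dist (f x) (f y) = 1"
    "\<forall>i < length P. f (b i) = P ! i"
    using assms(1) unfolding can_be_domed_def by blast
  then show ?thesis unfolding can_be_domed_def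
    by (intro exI[of _ T] exI[of _ "g \<circ> f"] exI[of _ b]) (simp add: assms(2))
qed

lemma can_be_domed_tri_221_congruent_imp:
  fixes A B C A' B' C' :: "real^3"
  assumes "dist A B = dist A' B'" "dist B C = dist B' C'" "dist C A = dist C' A'"
    and "can_be_domed (tri_221_polygon A B C)"
  shows "can_be_domed (tri_221_polygon A' B' C')"
proof -
  have "norm (A - B) = norm (A' - B')" "norm (C - B) = norm (C' - B')"
    and "norm ((A - B) - (C - B)) = norm ((A' - B') - (C' - B'))"
    using assms(1-3) by (simp_all add: dist_norm norm_minus_commute)
  then have "(A - B) \<bullet> (C - B) = (A' - B') \<bullet> (C' - B')" by (simp only: dot_norm_neg)
  then obtain L where L: "orthogonal_transformation L" "L (A - B) = A' - B'" "L (C - B) = C' - B'"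
    using \<open>norm (A - B) = _\<close> \<open>norm (C - B) = _\<close> orthogonal_transformation_exists_2 by metis
  define g where "g x = L (x - B) + B'" for x
  have "linear L" using L(1) by (rule orthogonal_transformation_linear)
  have "g (midpoint x y) = midpoint (g x) (g y)" for x y
  proof -
    have "midpoint x y - B = (1/2) *\<^sub>R ((x - B) + (y - B))"
      by (simp add: midpoint_def vec_eq_iff algebra_simps)
    then have "g (midpoint x y) = (1/2) *\<^sub>R (L (x - B) + L (y - B)) + B'"
      unfolding g_def by (simp only: linear_add[OF \<open>linear L\<close>] linear_scale[OF \<open>linear L\<close>])
    then show ?thesis by (simp add: g_def midpoint_def scaleR_add_right)
  qed
  moreover have "g A = A'" "g B = B'" "g C = C'"
    using L by (simp_all add: g_def linear_0[OF \<open>linear L\<close>])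
  ultimately have "map g (tri_221_polygon A B C) = tri_221_polygon A' B' C'"
    by (simp add: tri_221_polygon_def)
  moreover have "dist (g x) (g y) = dist x y" for x y
    using L(1) by (simp add: g_def dist_norm linear_diff[OF \<open>linear L\<close>, symmetric] orthogonal_transformation)
  ultimately show ?thesis using can_be_domed_map[OF assms(4)] by metis
qed

lemma can_be_domed_tri_221_congruent:
  fixes A B C A' B' C' :: "real^3"
  assumes "dist A B = dist A' B'" "dist B C = dist B' C'" "dist C A = dist C' A'"
  shows "can_be_domed (tri_221_polygon A B C) \<longleftrightarrow> can_be_domed (tri_221_polygon A' B' C')"
  using can_be_domed_tri_221_congruent_imp assms by metis

fun path_edges :: "'a list \<Rightarrow> 'a set set" where
  "path_edges (x # y # xs) = insert {x, y} (path_edges (y # xs))"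
| "path_edges _ = {}"

definition cycle_edges :: "'a list \<Rightarrow> 'a set set" where
  "cycle_edges xs = path_edges (xs @ take 1 xs)"

lemma path_edges_subset_set: "e \<in> path_edges xs \<Longrightarrow> e \<subseteq> set xs"
  by (induction xs rule: path_edges.induct) auto

lemma set_subset_Union_path_edges: "2 \<le> length xs \<Longrightarrow> set xs \<subseteq> \<Union>(path_edges xs)"
proof (induction xs rule: path_edges.induct)
  case (1 x y xs)
  then show ?case by (cases xs) auto
qed auto

lemma path_edges_snoc2: "path_edges (xs @ [a, b]) = insert {a, b} (path_edges (xs @ [a]))"
  by (induction xs rule: induct_list012) auto

lemma path_edges_nth: "path_edges xs = {{xs ! i, xs ! Suc i} | i. Suc i < length xs}"
proof (induction xs rule: path_edges.induct)
  case (1 x y xs)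
  let ?l = "x # y # xs"
  have "{{?l ! i, ?l ! Suc i} | i. Suc i < length ?l} =
      insert {x, y} {{(y # xs) ! j, (y # xs) ! Suc j} | j. Suc j < length (y # xs)}"
  proof (intro set_eqI iffI)
    fix e assume "e \<in> {{?l ! i, ?l ! Suc i} | i. Suc i < length ?l}"
    then obtain i where "e = {?l ! i, ?l ! Suc i}" "Suc i < length ?l" by blast
    then show "e \<in> insert {x, y} {{(y # xs) ! j, (y # xs) ! Suc j} | j. Suc j < length (y # xs)}"
      by (cases i) auto
  next
    fix e assume "e \<in> insert {x, y} {{(y # xs) ! j, (y # xs) ! Suc j} | j. Suc j < length (y # xs)}"
    then show "e \<in> {{?l ! i, ?l ! Suc i} | i. Suc i < length ?l}"
    proof
      assume "e = {x, y}"
      then show ?thesis by (intro CollectI exI[of _ 0]) simp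
    next
      assume "e \<in> {{(y # xs) ! j, (y # xs) ! Suc j} | j. Suc j < length (y # xs)}"
      then obtain j where "e = {(y # xs) ! j, (y # xs) ! Suc j}" "Suc j < length (y # xs)" by blast
      then show ?thesis by (intro CollectI exI[of _ "Suc j"]) simp
    qed
  qed
  then show ?case using 1 by simp
qed auto

lemma cycle_edges_Cons_Cons: "cycle_edges (u # w # bs) = insert {u, w} (path_edges (w # bs @ [u]))"
  by (simp add: cycle_edges_def)

lemma cycle_edges_rotate1: "cycle_edges (rotate1 xs) = cycle_edges xs"
proof (cases xs)
  case (Cons x ys)
  show ?thesis
  proof (cases ys)
    case (Cons y zs)
    have "path_edges ((y # zs) @ [x, y]) = insert {x, y} (path_edges ((y # zs) @ [x]))"
      by (rule path_edges_snoc2)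
    then show ?thesis using \<open>xs = x # ys\<close> Cons by (simp add: cycle_edges_def)
  qed (simp add: \<open>xs = x # ys\<close>)
qed simp

lemma cycle_edges_nth:
  assumes "xs \<noteq> []"
  shows "cycle_edges xs = {{xs ! i, xs ! (Suc i mod length xs)} | i. i < length xs}"
proof -
  let ?l = "xs @ take 1 xs"
  have "cycle_edges xs = (\<lambda>i. {?l ! i, ?l ! Suc i}) ` {..<length xs}"
    unfolding cycle_edges_def path_edges_nth using assms by auto
  also have "\<dots> = (\<lambda>i. {xs ! i, xs ! (Suc i mod length xs)}) ` {..<length xs}"
  proof (rule image_cong)
    fix i assume "i \<in> {..<length xs}"
    then show "{?l ! i, ?l ! Suc i} = {xs ! i, xs ! (Suc i mod length xs)}"
      using assms by (auto simp: nth_append hd_conv_nth take_Suc mod_Suc)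
  qed simp
  finally show ?thesis by auto
qed

lemma doubleton_notin_path_edges: "a \<notin> set xs \<Longrightarrow> {a, b} \<notin> path_edges xs"
  using path_edges_subset_set by fastforce

lemma end_edge_notin_path_edges:
  assumes "distinct (w # bs @ [u])" "bs \<noteq> []"
  shows "{u, w} \<notin> path_edges (w # bs @ [u])"
proof -
  obtain b bs' where "bs = b # bs'" using assms(2) by (cases bs) auto
  then show ?thesis
    using assms(1) doubleton_notin_path_edges[of w "b # bs' @ [u]" u] by (auto simp: insert_commute)
qed

lemma card_triangles_insert:
  assumes "finite T" "t \<notin> T"
  shows "card {s \<in> insert t T. e \<subseteq> s} = card {s \<in> T. e \<subseteq> s} + (if e \<subseteq> t then 1 else 0)"
proof (cases "e \<subseteq> t")
  case True
  then have "{s \<in> insert t T. e \<subseteq> s} = insert t {s \<in> T. e \<subseteq> s}" by auto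
  then show ?thesis using assms True by simp
next
  case False
  then have "{s \<in> insert t T. e \<subseteq> s} = {s \<in> T. e \<subseteq> s}" by auto
  then show ?thesis using False by simp
qed

lemma cx_edges_insert: "cx_edges (insert t T) = cx_edges T \<union> {e. card e = 2 \<and> e \<subseteq> t}"
  unfolding cx_edges_def by auto

lemma card2_subsets_triangle:
  assumes "distinct [u, w, z]"
  shows "{e. card e = 2 \<and> e \<subseteq> {u, w, z}} = {{u, w}, {u, z}, {w, z}}"
proof -
  have "e = {u, w} \<or> e = {u, z} \<or> e = {w, z}" if "card e = 2" "e \<subseteq> {u, w, z}" for e
  proof -
    obtain a b where "e = {a, b}" "a \<noteq> b" using \<open>card e = 2\<close> by (meson card_2_iff)
    then show ?thesis using \<open>e \<subseteq> {u, w, z}\<close> by auto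
  qed
  then show ?thesis using assms by auto
qed

lemma cx_boundary_edges_insert:
  assumes "finite T" "t \<notin> T"
  shows "cx_boundary_edges (insert t T) =
    {e \<in> cx_boundary_edges T. \<not> e \<subseteq> t} \<union> {e. card e = 2 \<and> e \<subseteq> t \<and> (\<forall>s\<in>T. \<not> e \<subseteq> s)}"
proof -
  have "card {s \<in> T. e \<subseteq> s} = 0 \<longleftrightarrow> (\<forall>s\<in>T. \<not> e \<subseteq> s)" for e
    using assms(1) by auto
  then show ?thesis
    using card_triangles_insert[OF assms] unfolding cx_boundary_edges_def cx_edges_insert
    by (auto simp: cx_edges_def)
qed

lemma rtrancl_all_pairs_Un:
  assumes "\<forall>x\<in>L. \<forall>y\<in>L. (x, y) \<in> R\<^sup>*" "R \<subseteq> R'"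
    and "\<forall>x\<in>S. \<forall>y\<in>S. (x, y) \<in> R'\<^sup>*" "L = {} \<or> S \<inter> L \<noteq> {}"
  shows "\<forall>x\<in>L \<union> S. \<forall>y\<in>L \<union> S. (x, y) \<in> R'\<^sup>*"
proof (cases "L = {}")
  case False
  then obtain r where r: "r \<in> S" "r \<in> L" using assms(4) by blast
  have "R\<^sup>* \<subseteq> R'\<^sup>*" using assms(2) by (rule rtrancl_mono)
  then have "(x, r) \<in> R'\<^sup>* \<and> (r, x) \<in> R'\<^sup>*" if "x \<in> L \<union> S" for x
    using that r assms(1,3) by blast
  then show ?thesis by (meson rtrancl_trans)
qed (use assms(3) in simp)

lemma link_vertices_insert:
  "link_vertices (insert t T) v = link_vertices T v \<union> (if v \<in> t then t - {v} else {})"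
  unfolding link_vertices_def by auto

text \<open>A triangle glued along at least one edge at each of its old vertices keeps every link
  connected: at such a vertex the new link edge shares an endpoint with the old link.\<close>

lemma link_connected_insert:
  assumes links: "\<forall>v\<in>cx_vertices T. \<forall>x\<in>link_vertices T v. \<forall>y\<in>link_vertices T v. (x, y) \<in> (link_adj T v)\<^sup>*"
    and "card t = 3"
    and glued: "\<forall>v\<in>t. v \<in> \<Union>T \<longrightarrow> (t - {v}) \<inter> link_vertices T v \<noteq> {}"
    and "x \<in> link_vertices (insert t T) v" "y \<in> link_vertices (insert t T) v"
  shows "(x, y) \<in> (link_adj (insert t T) v)\<^sup>*"
proof (cases "v \<in> t")
  case False
  then have "link_vertices (insert t T) v = link_vertices T v"
    and "link_adj (insert t T) v = link_adj T v"
    by (auto simp: link_vertices_insert link_adj_def)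
  moreover have "v \<in> cx_vertices T" using assms(4) False unfolding link_vertices_def cx_vertices_def by auto
  ultimately show ?thesis using assms(4,5) links by auto
next
  case True
  have "card (t - {v}) = 2" using True \<open>card t = 3\<close> by simp
  then obtain a c where ac: "t - {v} = {a, c}" "a \<noteq> c" by (meson card_2_iff)
  have old: "\<forall>x\<in>link_vertices T v. \<forall>y\<in>link_vertices T v. (x, y) \<in> (link_adj T v)\<^sup>*"
  proof (cases "v \<in> cx_vertices T")
    case False
    then have "link_vertices T v = {}" unfolding link_vertices_def cx_vertices_def by auto
    then show ?thesis by simp
  qed (use links in auto)
  have "t = {v, a, c}" "a \<noteq> v" "c \<noteq> v" using True ac by auto
  then have "(a, c) \<in> link_adj (insert t T) v" "(c, a) \<in> link_adj (insert t T) v"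
    using ac unfolding link_adj_def by (auto simp: insert_commute)
  then have new: "\<forall>x\<in>{a, c}. \<forall>y\<in>{a, c}. (x, y) \<in> (link_adj (insert t T) v)\<^sup>*" by auto
  have "link_vertices T v = {} \<or> {a, c} \<inter> link_vertices T v \<noteq> {}"
  proof (cases "v \<in> \<Union>T")
    case False
    then show ?thesis unfolding link_vertices_def by auto
  qed (use glued True ac in auto)
  moreover have "link_adj T v \<subseteq> link_adj (insert t T) v" unfolding link_adj_def by auto
  ultimately have "\<forall>x\<in>link_vertices T v \<union> {a, c}. \<forall>y\<in>link_vertices T v \<union> {a, c}.
      (x, y) \<in> (link_adj (insert t T) v)\<^sup>*"
    using rtrancl_all_pairs_Un[OF old _ new] by blast
  moreover have "link_vertices (insert t T) v = link_vertices T v \<union> {a, c}"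
    using True ac by (simp add: link_vertices_insert)
  ultimately show ?thesis using assms(4,5) by (metis Un_iff)
qed

lemma surface_complex_insert:
  assumes S: "surface_complex T" and "card t = 3" "t \<notin> T"
    and edges: "\<forall>e. card e = 2 \<and> e \<subseteq> t \<longrightarrow> card {s \<in> T. e \<subseteq> s} \<le> 1"
    and "t \<inter> \<Union>T \<noteq> {}"
    and glued: "\<forall>v\<in>t. v \<in> \<Union>T \<longrightarrow> (t - {v}) \<inter> link_vertices T v \<noteq> {}"
  shows "surface_complex (insert t T)"
proof -
  have fin: "finite T" using S unfolding surface_complex_def by simp
  have "\<forall>x\<in>cx_vertices T \<union> t. \<forall>y\<in>cx_vertices T \<union> t. (x, y) \<in> (cx_adj (insert t T))\<^sup>*"
  proof (rule rtrancl_all_pairs_Un)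
    show "\<forall>x\<in>cx_vertices T. \<forall>y\<in>cx_vertices T. (x, y) \<in> (cx_adj T)\<^sup>*"
      using S unfolding surface_complex_def by blast
    show "\<forall>x\<in>t. \<forall>y\<in>t. (x, y) \<in> (cx_adj (insert t T))\<^sup>*" unfolding cx_adj_def by auto
    show "cx_vertices T = {} \<or> t \<inter> cx_vertices T \<noteq> {}"
      using \<open>t \<inter> \<Union>T \<noteq> {}\<close> unfolding cx_vertices_def by auto
  qed (auto simp: cx_adj_def)
  moreover have "cx_vertices (insert t T) = cx_vertices T \<union> t" unfolding cx_vertices_def by auto
  moreover have "card {s \<in> insert t T. e \<subseteq> s} \<le> 2" if "e \<in> cx_edges (insert t T)" for e
  proof (cases "e \<subseteq> t")
    case True
    then show ?thesis
      using that edges card_triangles_insert[OF fin \<open>t \<notin> T\<close>, of e] unfolding cx_edges_def by auto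
  next
    case False
    then have "e \<in> cx_edges T" using that cx_edges_insert by auto
    then show ?thesis
      using S False card_triangles_insert[OF fin \<open>t \<notin> T\<close>, of e] unfolding surface_complex_def by auto
  qed
  moreover have "\<forall>v\<in>cx_vertices (insert t T). \<forall>x\<in>link_vertices (insert t T) v.
      \<forall>y\<in>link_vertices (insert t T) v. (x, y) \<in> (link_adj (insert t T) v)\<^sup>*"
    using S link_connected_insert[OF _ \<open>card t = 3\<close> glued] unfolding surface_complex_def by blast
  ultimately show ?thesis
    using S \<open>card t = 3\<close> unfolding surface_complex_def by auto
qed

lemma cx_boundary_edgeD:
  assumes "e \<in> cx_boundary_edges T"
  shows "card e = 2" "card {s \<in> T. e \<subseteq> s} = 1" "\<exists>s\<in>T. e \<subseteq> s"
  using assms unfolding cx_boundary_edges_def cx_edges_def by auto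

lemma cx_edge_link_vertices: "{a, b} \<in> cx_edges T \<Longrightarrow> a \<noteq> b \<Longrightarrow> b \<in> link_vertices T a"
  unfolding cx_edges_def link_vertices_def by auto

lemma cx_boundary_edge_link_vertices:
  "{a, b} \<in> cx_boundary_edges T \<Longrightarrow> a \<noteq> b \<Longrightarrow> b \<in> link_vertices T a \<and> a \<in> link_vertices T b"
  unfolding cx_boundary_edges_def by (metis (mono_tags) cx_edge_link_vertices insert_commute mem_Collect_eq)

lemma card_triangles_le_1:
  assumes "e \<in> cx_boundary_edges T \<or> (\<forall>s\<in>T. \<not> e \<subseteq> s)"
  shows "card {s \<in> T. e \<subseteq> s} \<le> 1"
proof (cases "\<forall>s\<in>T. \<not> e \<subseteq> s")
  case True
  then have "{s \<in> T. e \<subseteq> s} = {}" by blast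
  then show ?thesis by (simp only: card.empty)
qed (use assms cx_boundary_edgeD(2) in auto)

lemma surface_complex_ear:
  assumes S: "surface_complex T" and uw: "{u, w} \<in> cx_boundary_edges T" "u \<noteq> w"
    and z: "z \<notin> \<Union>T"
  shows "surface_complex (insert {u, w, z} T)"
proof (rule surface_complex_insert[OF S])
  have "u \<in> \<Union>T" "w \<in> \<Union>T" using cx_boundary_edgeD(3)[OF uw(1)] by auto
  then have d: "distinct [u, w, z]" using z uw(2) by auto
  then show "card {u, w, z} = 3" by simp
  show "{u, w, z} \<notin> T" using z by auto
  show "\<forall>e. card e = 2 \<and> e \<subseteq> {u, w, z} \<longrightarrow> card {s \<in> T. e \<subseteq> s} \<le> 1"
  proof (intro allI impI card_triangles_le_1)
    fix e assume "card e = 2 \<and> e \<subseteq> {u, w, z}"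
    then have "e = {u, w} \<or> z \<in> e" using card2_subsets_triangle[OF d] by blast
    then show "e \<in> cx_boundary_edges T \<or> (\<forall>s\<in>T. \<not> e \<subseteq> s)" using uw(1) z by blast
  qed
  show "{u, w, z} \<inter> \<Union>T \<noteq> {}" using \<open>u \<in> \<Union>T\<close> by blast
  show "\<forall>v\<in>{u, w, z}. v \<in> \<Union>T \<longrightarrow> ({u, w, z} - {v}) \<inter> link_vertices T v \<noteq> {}"
  proof (intro ballI impI)
    fix v assume "v \<in> {u, w, z}" "v \<in> \<Union>T"
    then have "v = u \<or> v = w" using z by auto
    then show "({u, w, z} - {v}) \<inter> link_vertices T v \<noteq> {}"
      using cx_boundary_edge_link_vertices[OF uw] d by auto
  qed
qed

lemma cx_boundary_edges_ear:
  assumes "finite T" and uw: "{u, w} \<in> cx_boundary_edges T" and z: "z \<notin> \<Union>T"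
  shows "cx_boundary_edges (insert {u, w, z} T) = insert {u, z} (insert {z, w} (cx_boundary_edges T - {{u, w}}))"
proof -
  have "u \<in> \<Union>T" "w \<in> \<Union>T" "card {u, w} = 2" using cx_boundary_edgeD[OF uw] by auto
  then have d: "distinct [u, w, z]" using z by auto
  have t: "{u, w, z} \<notin> T" using z by auto
  note edges = card2_subsets_triangle[OF d]
  have "{e \<in> cx_boundary_edges T. \<not> e \<subseteq> {u, w, z}} = cx_boundary_edges T - {{u, w}}"
  proof -
    have "e = {u, w}" if "e \<in> cx_boundary_edges T" "e \<subseteq> {u, w, z}" for e
    proof -
      have "z \<notin> e" using cx_boundary_edgeD(3)[OF that(1)] z by auto
      moreover have "e \<in> {{u, w}, {u, z}, {w, z}}"
        using edges cx_boundary_edgeD(1)[OF that(1)] that(2) by blast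
      ultimately show ?thesis by auto
    qed
    then show ?thesis by auto
  qed
  moreover have "{e. card e = 2 \<and> e \<subseteq> {u, w, z} \<and> (\<forall>s\<in>T. \<not> e \<subseteq> s)} = {{u, z}, {z, w}}"
  proof -
    have "{e. card e = 2 \<and> e \<subseteq> {u, w, z} \<and> (\<forall>s\<in>T. \<not> e \<subseteq> s)} =
        {e \<in> {{u, w}, {u, z}, {w, z}}. \<forall>s\<in>T. \<not> e \<subseteq> s}"
      unfolding edges[symmetric] by blast
    moreover have "\<not> (\<forall>s\<in>T. \<not> {u, w} \<subseteq> s)" using cx_boundary_edgeD(3)[OF uw] by blast
    moreover have "\<forall>s\<in>T. \<not> {u, z} \<subseteq> s" "\<forall>s\<in>T. \<not> {w, z} \<subseteq> s" using z by auto
    ultimately show ?thesis by (auto simp: insert_commute)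
  qed
  ultimately show ?thesis unfolding cx_boundary_edges_insert[OF assms(1) t] by auto
qed

lemma surface_complex_close:
  assumes S: "surface_complex T" and uw: "{u, w} \<in> cx_boundary_edges T"
    and wz: "{w, z} \<in> cx_boundary_edges T" and d: "distinct [u, w, z]"
    and uz: "{u, z} \<notin> cx_edges T"
  shows "surface_complex (insert {u, w, z} T)"
proof (rule surface_complex_insert[OF S])
  have uz_free: "\<forall>s\<in>T. \<not> {u, z} \<subseteq> s" using uz d unfolding cx_edges_def by auto
  moreover have "{u, z} \<subseteq> {u, w, z}" by auto
  ultimately show "{u, w, z} \<notin> T" by metis
  show "card {u, w, z} = 3" using d by simp
  show "\<forall>e. card e = 2 \<and> e \<subseteq> {u, w, z} \<longrightarrow> card {s \<in> T. e \<subseteq> s} \<le> 1"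
  proof (intro allI impI card_triangles_le_1)
    fix e assume "card e = 2 \<and> e \<subseteq> {u, w, z}"
    then have "e \<in> {{u, w}, {w, z}} \<or> e = {u, z}" using card2_subsets_triangle[OF d] by blast
    then show "e \<in> cx_boundary_edges T \<or> (\<forall>s\<in>T. \<not> e \<subseteq> s)" using uw wz uz_free by blast
  qed
  show "{u, w, z} \<inter> \<Union>T \<noteq> {}" using cx_boundary_edgeD(3)[OF uw] by blast
  show "\<forall>v\<in>{u, w, z}. v \<in> \<Union>T \<longrightarrow> ({u, w, z} - {v}) \<inter> link_vertices T v \<noteq> {}"
    using cx_boundary_edge_link_vertices[OF uw] cx_boundary_edge_link_vertices[OF wz] d by auto
qed

lemma cx_boundary_edges_close:
  assumes "finite T" and uw: "{u, w} \<in> cx_boundary_edges T"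
    and wz: "{w, z} \<in> cx_boundary_edges T" and d: "distinct [u, w, z]"
    and uz: "{u, z} \<notin> cx_edges T"
  shows "cx_boundary_edges (insert {u, w, z} T) = insert {u, z} (cx_boundary_edges T - {{u, w}, {w, z}})"
proof -
  have uz_free: "\<forall>s\<in>T. \<not> {u, z} \<subseteq> s" using uz d unfolding cx_edges_def by auto
  moreover have "{u, z} \<subseteq> {u, w, z}" by auto
  ultimately have t: "{u, w, z} \<notin> T" by metis
  note edges = card2_subsets_triangle[OF d]
  have "{e \<in> cx_boundary_edges T. \<not> e \<subseteq> {u, w, z}} = cx_boundary_edges T - {{u, w}, {w, z}}"
  proof -
    have "e \<in> {{u, w}, {w, z}}" if "e \<in> cx_boundary_edges T" "e \<subseteq> {u, w, z}" for e
    proof -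
      have "e \<noteq> {u, z}" using that(1) uz unfolding cx_boundary_edges_def by auto
      moreover have "e \<in> {{u, w}, {u, z}, {w, z}}"
        using edges cx_boundary_edgeD(1)[OF that(1)] that(2) by blast
      ultimately show ?thesis by auto
    qed
    then show ?thesis by auto
  qed
  moreover have "{e. card e = 2 \<and> e \<subseteq> {u, w, z} \<and> (\<forall>s\<in>T. \<not> e \<subseteq> s)} = {{u, z}}"
  proof -
    have "{e. card e = 2 \<and> e \<subseteq> {u, w, z} \<and> (\<forall>s\<in>T. \<not> e \<subseteq> s)} =
        {e \<in> {{u, w}, {u, z}, {w, z}}. \<forall>s\<in>T. \<not> e \<subseteq> s}"
      unfolding edges[symmetric] by blast
    moreover have "\<not> (\<forall>s\<in>T. \<not> {u, w} \<subseteq> s)" "\<not> (\<forall>s\<in>T. \<not> {w, z} \<subseteq> s)"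
      using cx_boundary_edgeD(3)[OF uw] cx_boundary_edgeD(3)[OF wz] by blast+
    ultimately show ?thesis using uz_free by auto
  qed
  ultimately show ?thesis unfolding cx_boundary_edges_insert[OF assms(1) t] by auto
qed

definition equilateral_map :: "nat set set \<Rightarrow> (nat \<Rightarrow> real^3) \<Rightarrow> bool" where
  "equilateral_map T f \<longleftrightarrow> (\<forall>t\<in>T. \<forall>x\<in>t. \<forall>y\<in>t. x \<noteq> y \<longrightarrow> dist (f x) (f y) = 1)"

definition dome :: "nat set set \<Rightarrow> (nat \<Rightarrow> real^3) \<Rightarrow> nat list \<Rightarrow> bool" where
  "dome T f bs \<longleftrightarrow> surface_complex T \<and> equilateral_map T f \<and> 3 \<le> length bs \<and> distinct bs \<and>
     cx_boundary_edges T = cycle_edges bs"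

lemma can_be_domed_iff_dome: "can_be_domed P \<longleftrightarrow> (\<exists>T f bs. dome T f bs \<and> map f bs = P)"
proof
  assume "can_be_domed P"
  then obtain T f b where S: "surface_complex T" and B: "boundary_cycle T (length P) b"
    and E: "equilateral_map T f" and F: "\<forall>i < length P. f (b i) = P ! i"
    unfolding can_be_domed_def equilateral_map_def by blast
  define bs where "bs = map b [0..<length P]"
  have n: "3 \<le> length P" "length bs = length P" using B by (simp_all add: bs_def boundary_cycle_def)
  have "distinct bs" using B by (simp add: bs_def distinct_map boundary_cycle_def atLeast0LessThan)
  moreover have "cycle_edges bs = cx_boundary_edges T"
  proof -
    have "bs \<noteq> []" using n by auto
    then show ?thesis
      using B n by (simp add: cycle_edges_nth boundary_cycle_def bs_def setcompr_eq_image cong: image_cong_simp)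
  qed
  moreover have "map f bs = P" using F by (intro nth_equalityI) (simp_all add: bs_def)
  ultimately show "\<exists>T f bs. dome T f bs \<and> map f bs = P" using S E n unfolding dome_def by metis
next
  assume "\<exists>T f bs. dome T f bs \<and> map f bs = P"
  then obtain T f bs where D: "dome T f bs" and P: "map f bs = P" by blast
  then have "length bs = length P" "bs \<noteq> []" unfolding dome_def by auto
  then have "boundary_cycle T (length P) (nth bs)"
    using D cycle_edges_nth[of bs] unfolding dome_def boundary_cycle_def by (simp add: inj_on_nth)
  moreover have "\<forall>i < length P. f (bs ! i) = P ! i" using P by auto
  ultimately show "can_be_domed P"
    using D unfolding can_be_domed_def dome_def equilateral_map_def by blast
qed

lemma finite_Union_surface_complex: "surface_complex T \<Longrightarrow> finite (\<Union>T)"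
  unfolding surface_complex_def by (metis card.infinite finite_Union zero_neq_numeral)

lemma dome_set_subset_Union:
  assumes "dome T f bs"
  shows "set bs \<subseteq> \<Union>T"
proof -
  have "2 \<le> length (bs @ take 1 bs)" using assms unfolding dome_def by simp
  then have "set (bs @ take 1 bs) \<subseteq> \<Union>(path_edges (bs @ take 1 bs))"
    by (rule set_subset_Union_path_edges)
  then have "set bs \<subseteq> \<Union>(path_edges (bs @ take 1 bs))" by auto
  also have "\<dots> = \<Union>(cx_boundary_edges T)" using assms unfolding dome_def cycle_edges_def by simp
  also have "\<dots> \<subseteq> \<Union>T" using cx_boundary_edgeD(3) by blast
  finally show ?thesis .
qed

lemma dome_rotate1: "dome T f bs \<Longrightarrow> dome T f (rotate1 bs)"
  by (simp add: dome_def cycle_edges_rotate1)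

lemma equilateral_map_boundary_edge:
  assumes "equilateral_map T f" "{a, b} \<in> cx_boundary_edges T" "a \<noteq> b"
  shows "dist (f a) (f b) = 1"
proof -
  obtain s where "s \<in> T" "{a, b} \<subseteq> s" using cx_boundary_edgeD(3)[OF assms(2)] by blast
  then show ?thesis using assms(1,3) unfolding equilateral_map_def by blast
qed

lemma equilateral_map_insert:
  assumes "equilateral_map T f" "\<forall>x\<in>t. \<forall>y\<in>t. x \<noteq> y \<longrightarrow> dist (f x) (f y) = 1"
  shows "equilateral_map (insert t T) f"
  using assms unfolding equilateral_map_def by simp

lemma equilateral_map_update:
  assumes "equilateral_map T f" "z \<notin> \<Union>T"
  shows "equilateral_map T (f(z := X))"
  using assms unfolding equilateral_map_def by (auto simp: fun_upd_def)

lemma dome_ear: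
  assumes D: "dome T f (u # w # bs)" and z: "z \<notin> \<Union>T"
    and X: "dist (f u) X = 1" "dist (f w) X = 1"
  shows "dome (insert {u, w, z} T) (f(z := X)) (u # z # w # bs)"
proof -
  have S: "surface_complex T" and E: "equilateral_map T f" and "bs \<noteq> []"
    and d: "distinct (u # w # bs)" and B: "cx_boundary_edges T = cycle_edges (u # w # bs)"
    using D unfolding dome_def by auto
  have "z \<notin> set (u # w # bs)" using dome_set_subset_Union[OF D] z by blast
  with d have d': "distinct (u # z # w # bs)" by auto
  have uw: "{u, w} \<in> cx_boundary_edges T" "u \<noteq> w" using B d by (auto simp: cycle_edges_Cons_Cons)
  have "{u, w} \<notin> path_edges (w # bs @ [u])"
    using d \<open>bs \<noteq> []\<close> by (intro end_edge_notin_path_edges) auto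
  then have "cx_boundary_edges T - {{u, w}} = path_edges (w # bs @ [u])"
    unfolding B cycle_edges_Cons_Cons by (simp add: Diff_insert_absorb)
  then have "cx_boundary_edges (insert {u, w, z} T) = cycle_edges (u # z # w # bs)"
    using S uw z by (simp add: cx_boundary_edges_ear surface_complex_def cycle_edges_Cons_Cons)
  moreover have "equilateral_map (insert {u, w, z} T) (f(z := X))"
  proof (rule equilateral_map_insert)
    show "equilateral_map T (f(z := X))" using E z by (rule equilateral_map_update)
    have "dist (f u) (f w) = 1" using E uw by (rule equilateral_map_boundary_edge)
    then show "\<forall>x\<in>{u, w, z}. \<forall>y\<in>{u, w, z}. x \<noteq> y \<longrightarrow> dist ((f(z := X)) x) ((f(z := X)) y) = 1"
      using X d' by (auto simp: dist_commute)
  qed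
  ultimately show ?thesis using surface_complex_ear[OF S uw z] d' unfolding dome_def by simp
qed

lemma dome_close:
  assumes D: "dome T f (u # w # z # bs)" and "bs \<noteq> []"
    and uz: "{u, z} \<notin> cx_edges T" and "dist (f u) (f z) = 1"
  shows "dome (insert {u, w, z} T) f (u # z # bs)"
proof -
  have S: "surface_complex T" and E: "equilateral_map T f"
    and d: "distinct (u # w # z # bs)" and B: "cx_boundary_edges T = cycle_edges (u # w # z # bs)"
    using D unfolding dome_def by auto
  have uw: "{u, w} \<in> cx_boundary_edges T" and wz: "{w, z} \<in> cx_boundary_edges T"
    using B by (simp_all add: cycle_edges_Cons_Cons)
  have fin: "finite T" using S unfolding surface_complex_def by simp
  have "w \<notin> set (z # bs @ [u])" using d by auto
  then have "{u, w} \<notin> path_edges (z # bs @ [u])" "{w, z} \<notin> path_edges (z # bs @ [u])"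
    using doubleton_notin_path_edges[of w "z # bs @ [u]" u] doubleton_notin_path_edges[of w "z # bs @ [u]" z]
    by (simp_all add: insert_commute)
  then have "cx_boundary_edges T - {{u, w}, {w, z}} = path_edges (z # bs @ [u])"
    unfolding B cycle_edges_Cons_Cons by auto
  then have "cx_boundary_edges (insert {u, w, z} T) = cycle_edges (u # z # bs)"
    using d by (simp add: cx_boundary_edges_close[OF fin uw wz _ uz] cycle_edges_Cons_Cons)
  moreover have "equilateral_map (insert {u, w, z} T) f"
  proof (rule equilateral_map_insert[OF E])
    have "dist (f u) (f w) = 1" "dist (f w) (f z) = 1"
      using d equilateral_map_boundary_edge[OF E] uw wz by auto
    then show "\<forall>x\<in>{u, w, z}. \<forall>y\<in>{u, w, z}. x \<noteq> y \<longrightarrow> dist (f x) (f y) = 1"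
      using \<open>dist (f u) (f z) = 1\<close> by (auto simp: dist_commute)
  qed
  moreover have "3 \<le> length (u # z # bs)" using \<open>bs \<noteq> []\<close> by (cases bs) auto
  ultimately show ?thesis using surface_complex_close[OF S uw wz _ uz] d unfolding dome_def by auto
qed

text \<open>Coning off the boundary path \<open>ws\<close> from the boundary vertex \<open>x\<close> by successive closings;
  the hypothesis on the triangles at \<open>x\<close> guarantees that each closing edge is new.\<close>

lemma dome_fan:
  assumes "dome T f (x # ws @ rest)" "ws \<noteq> []" "rest \<noteq> []"
    and "\<forall>t\<in>T. x \<in> t \<longrightarrow> t \<inter> set (tl ws) = {}"
    and "\<forall>w\<in>set ws. dist (f x) (f w) = 1"
  shows "\<exists>T'. dome T' f (x # last ws # rest)"
  using assms
proof (induction ws arbitrary: T)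
  case (Cons w ws)
  show ?case
  proof (cases ws)
    case Nil
    then show ?thesis using Cons.prems(1) by auto
  next
    case (Cons z ws')
    have D: "dome T f (x # w # z # (ws' @ rest))" using Cons.prems(1) \<open>ws = z # ws'\<close> by simp
    have "{x, z} \<notin> cx_edges T" using Cons.prems(4) \<open>ws = z # ws'\<close> unfolding cx_edges_def by auto
    then have D': "dome (insert {x, w, z} T) f (x # z # ws' @ rest)"
      using dome_close[OF D] Cons.prems(3,5) \<open>ws = z # ws'\<close> by simp
    have "distinct (x # w # z # ws' @ rest)" using D unfolding dome_def by simp
    then have "\<forall>t\<in>insert {x, w, z} T. x \<in> t \<longrightarrow> t \<inter> set ws' = {}"
      using Cons.prems(4) \<open>ws = z # ws'\<close> by auto
    then show ?thesis using Cons.IH[OF _ _ Cons.prems(3)] D' Cons.prems(5) \<open>ws = z # ws'\<close> by auto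
  qed
qed simp

lemma can_be_domed_rotate1: "can_be_domed P \<Longrightarrow> can_be_domed (rotate1 P)"
  unfolding can_be_domed_iff_dome by (metis dome_rotate1 rotate1_map)

lemma can_be_domed_rotate: "can_be_domed P \<Longrightarrow> can_be_domed (rotate n P)"
  by (induction n) (simp_all add: can_be_domed_rotate1)

lemma can_be_domed_append_swap: "can_be_domed (xs @ ys) \<Longrightarrow> can_be_domed (ys @ xs)"
  by (metis can_be_domed_rotate rotate_append)

lemma can_be_domed_cone:
  assumes "can_be_domed (p # q # qs @ ps)" and unit: "\<forall>r\<in>set (p # q # qs). dist r X = 1"
  shows "can_be_domed (X # last (q # qs) # ps @ [p])"
proof -
  obtain T f vs where D: "dome T f vs" and P: "map f vs = p # q # qs @ ps"
    using assms(1) unfolding can_be_domed_iff_dome by auto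
  then obtain a b bs cs where vs: "vs = a # b # bs @ cs"
    and fv: "f a = p" "f b = q" "map f bs = qs" "map f cs = ps"
    by (auto simp: map_eq_Cons_conv map_eq_append_conv)
  obtain z where z: "z \<notin> \<Union>T"
    using finite_Union_surface_complex D ex_new_if_finite[OF infinite_UNIV_nat] unfolding dome_def by blast
  define g where "g = f(z := X)"
  have "dome (insert {a, b, z} T) g (a # z # b # bs @ cs)"
    unfolding g_def using dome_ear[OF _ z] D unit fv vs by (simp add: dist_commute)
  then have D': "dome (insert {a, b, z} T) g (z # (b # bs) @ cs @ [a])"
    using dome_rotate1 by fastforce
  have "z \<notin> set vs" using dome_set_subset_Union[OF D] z by blast
  then have gv: "g v = f v" if "v \<in> set vs" for v using that by (auto simp: g_def)
  have "distinct vs" using D unfolding dome_def by simp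
  then have "\<forall>t\<in>insert {a, b, z} T. z \<in> t \<longrightarrow> t \<inter> set bs = {}"
    using z \<open>z \<notin> set vs\<close> vs by auto
  moreover have "\<forall>w\<in>set (b # bs). dist (g z) (g w) = 1"
    using unit fv gv vs by (auto simp: g_def dist_commute)
  ultimately obtain T' where "dome T' g (z # last (b # bs) # cs @ [a])"
    using dome_fan[OF D'] by auto
  moreover have "map g (z # last (b # bs) # cs @ [a]) = X # last (q # qs) # ps @ [p]"
  proof -
    have "g (last (b # bs)) = last (map f (b # bs))" using gv vs by (simp add: last_map)
    moreover have "map g cs = ps" using gv vs fv(4) by (metis Un_iff list.set_intros(2) map_eq_conv set_append)
    ultimately show ?thesis using gv vs fv by (simp add: g_def)
  qed
  ultimately show ?thesis unfolding can_be_domed_iff_dome by metis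
qed

lemma can_be_domed_pentagon_iff_quadrilateral:
  assumes "dist v1 A' = 1" "dist v4 A' = 1" "dist A' C' = 1" "dist v3 C' = 1" "dist v4 C' = 1"
    and "dist v1 v4 = 1" "dist v3 v4 = 1"
  shows "can_be_domed [A', v1, v2, v3, C'] \<longleftrightarrow> can_be_domed [v1, v2, v3, v4]"
proof
  assume "can_be_domed [A', v1, v2, v3, C']"
  then have "can_be_domed (v3 # C' # [A', v1] @ [v2])"
    using can_be_domed_append_swap[of "[A', v1, v2]" "[v3, C']"] by simp
  then have "can_be_domed ([v4] @ [v1, v2, v3])"
    using can_be_domed_cone[of v3 C' "[A', v1]" "[v2]" v4] assms by (simp add: dist_commute)
  then show "can_be_domed [v1, v2, v3, v4]"
    using can_be_domed_append_swap by fastforce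
next
  assume "can_be_domed [v1, v2, v3, v4]"
  then have "can_be_domed (v4 # v1 # [] @ [v2, v3])"
    using can_be_domed_append_swap[of "[v1, v2, v3]" "[v4]"] by simp
  then have "can_be_domed ([A', v1, v2] @ [v3, v4])"
    using can_be_domed_cone[of v4 v1 "[]" "[v2, v3]" A'] assms by (simp add: dist_commute)
  then have "can_be_domed (v3 # v4 # [A'] @ [v1, v2])"
    using can_be_domed_append_swap by fastforce
  then have "can_be_domed ([C'] @ [A', v1, v2, v3])"
    using can_be_domed_cone[of v3 v4 "[A']" "[v1, v2]" C'] assms by (simp add: dist_commute)
  then show "can_be_domed [A', v1, v2, v3, C']"
    using can_be_domed_append_swap by fastforce
qed

lemma dist_eq_iff_inner: "dist x y = r \<longleftrightarrow> (x - y) \<bullet> (x - y) = r\<^sup>2 \<and> 0 \<le> r"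
  by (metis dist_norm norm_ge_zero power2_norm_eq_inner real_sqrt_abs real_sqrt_unique
      abs_of_nonneg norm_eq_sqrt_inner)

lemma unit_rhombus_extension:
  fixes v1 v2 v3 v4 :: "real^3"
  assumes "is_unit_rhombus (1/2) (sqrt 3) v1 v2 v3 v4"
  defines "A' \<equiv> 2 *\<^sub>R v1 - v2" and "C' \<equiv> 2 *\<^sub>R v3 - v2"
  shows "dist v1 A' = 1" "dist v4 A' = 1" "dist A' C' = 1" "dist v3 C' = 1" "dist v4 C' = 1"
    and "dist v1 v4 = 1" "dist v3 v4 = 1"
    and "dist A' v2 = 2" "dist v2 C' = 2" "midpoint A' v2 = v1" "midpoint v2 C' = v3"
proof -
  define a c d where "a = v1 - v2" and "c = v3 - v2" and "d = v4 - v2"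
  have r: "dist v1 v2 = 1" "dist v2 v3 = 1" "dist v3 v4 = 1" "dist v4 v1 = 1"
    "dist v1 v3 = 1/2" "dist v2 v4 = sqrt 3"
    using assms(1) unfolding is_unit_rhombus_def by auto
  have aa: "a \<bullet> a = 1" using r(1) unfolding dist_eq_iff_inner a_def by simp
  have cc: "c \<bullet> c = 1" using r(2) unfolding dist_eq_iff_inner c_def by (simp add: inner_commute inner_diff)
  have dd: "d \<bullet> d = 3" using r(6) unfolding dist_eq_iff_inner d_def by (simp add: inner_commute inner_diff)
  have "(a - c) \<bullet> (a - c) = 1/4" using r(5) unfolding dist_eq_iff_inner a_def c_def
    by (simp add: power2_eq_square)
  then have ac: "a \<bullet> c = 7/8" using aa cc by (simp add: inner_diff inner_commute)
  have "(c - d) \<bullet> (c - d) = 1" using r(3) unfolding dist_eq_iff_inner c_def d_def by simp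
  then have cd: "c \<bullet> d = 3/2" using cc dd by (simp add: inner_diff inner_commute)
  have "(d - a) \<bullet> (d - a) = 1" using r(4) unfolding dist_eq_iff_inner d_def a_def by simp
  then have ad: "a \<bullet> d = 3/2" using dd aa by (simp add: inner_diff inner_commute)
  have A: "A' = v2 + 2 *\<^sub>R a" and C: "C' = v2 + 2 *\<^sub>R c"
    unfolding A'_def C'_def a_def c_def by (simp_all add: vec_eq_iff algebra_simps)
  have v: "v1 = v2 + a" "v3 = v2 + c" "v4 = v2 + d" by (simp_all add: a_def c_def d_def)
  show "dist v1 A' = 1" "dist v4 A' = 1" "dist A' C' = 1" "dist v3 C' = 1" "dist v4 C' = 1"
    "dist A' v2 = 2" "dist v2 C' = 2"
    unfolding dist_eq_iff_inner A C v using aa cc dd ac cd ad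
    by (simp_all add: inner_diff inner_commute algebra_simps)
  show "dist v1 v4 = 1" "dist v3 v4 = 1" using r by (simp_all add: dist_commute)
  show "midpoint A' v2 = v1" "midpoint v2 C' = v3" unfolding A'_def C'_def midpoint_def
    by (simp_all add: vec_eq_iff)
qed

theorem proposition5p2:
  fixes A B C v1 v2 v3 v4 :: "real^3"
  assumes "dist A B = 2" and "dist B C = 2" and "dist C A = 1"
    and "is_unit_rhombus (1/2) (sqrt 3) v1 v2 v3 v4"
  shows "can_be_domed (tri_221_polygon A B C) \<longleftrightarrow> can_be_domed [v1, v2, v3, v4]"
proof -
  define A' C' where "A' = 2 *\<^sub>R v1 - v2" and "C' = 2 *\<^sub>R v3 - v2"
  note ext = unit_rhombus_extension[OF assms(4), folded A'_def C'_def]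
  have "can_be_domed (tri_221_polygon A B C) \<longleftrightarrow> can_be_domed (tri_221_polygon A' v2 C')"
    using assms(1-3) ext(3,8,9) by (intro can_be_domed_tri_221_congruent) (simp_all add: dist_commute)
  also have "tri_221_polygon A' v2 C' = [A', v1, v2, v3, C']"
    unfolding tri_221_polygon_def using ext(10,11) by simp
  also have "can_be_domed [A', v1, v2, v3, C'] \<longleftrightarrow> can_be_domed [v1, v2, v3, v4]"
    using ext(1-7) by (rule can_be_domed_pentagon_iff_quadrilateral)
  finally show ?thesis .
qed

end
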